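(* Any bandit-feedback learning algorithm for episodic MDPs with $k=2$ levels, horizon length $H$ and $A$ actions has expected regret $\Omega\left(\min\left\{\sqrt{ A^H T} \,,\, T\right\}\right)$ over $T$ episodes; that is, there is an absolute constant $c>0$ such that for every such algorithm there is an MDP instance with $k=2$ on which its expected regret is at least $c\min\{\sqrt{A^HT},T\}$.
   Context: An episodic MDP has states $(l,i)$ for levels $l\in[k]$ and stages $i\in[H]$, start state $(1,1)$, and action set $\mathcal{A}$ of size $A$. For $i\in[H-1]$, action $a$ at $(l,i)$ moves to $(s,i+1)$ with probability $p_i(s\mid l,a)$. Action $a$ at $(l,i)$ yields a random reward $R_{l,i}(a)\ge0$ with mean $r_{l,i}(a)$, and the total reward of any execution lies in $[0,1]$. A deterministic policy is a matrix $(\pi_{l,i})$ of actions; its value $V(\Pi)$ is its expected total reward, and $\mathsf{Opt}$ is the maximum value. Bandit-feedback learning: transitions and rewards are unknown; in each of $T$ episodes the learner chooses a policy $\pi^t$ based on past observations, executes it once, and observes only the total reward of the episode (not the visited states nor per-step rewards). Regret is $\sum_{t=1}^T(\mathsf{Opt}-V(\pi^t))$; expected regret is its expectation. *)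

theory Defs
  imports "HOL-Probability.Probability_Mass_Function"
begin

text \<open>Episodic MDP with levels l < k and stages i < H (0-based; start state (0,0)),
  actions a < A.  trans M i l a : distribution of the next level when action a is taken
  at (l,i) (only relevant for i+1 < H);  rew M l i a : distribution of the random reward
  R_{l,i}(a).\<close>
record mdp =
  trans :: "nat \<Rightarrow> nat \<Rightarrow> nat \<Rightarrow> nat pmf"
  rew   :: "nat \<Rightarrow> nat \<Rightarrow> nat \<Rightarrow> real pmf"

definition valid_mdp :: "nat \<Rightarrow> nat \<Rightarrow> nat \<Rightarrow> mdp \<Rightarrow> bool" where
  "valid_mdp k H A M \<longleftrightarrow>
     (\<forall>i l a. i + 1 < H \<and> l < k \<and> a < A \<longrightarrow> set_pmf (trans M i l a) \<subseteq> {..<k}) \<and>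
     (\<forall>l i a x. l < k \<and> i < H \<and> a < A \<and> x \<in> set_pmf (rew M l i a) \<longrightarrow> 0 \<le> x) \<and>
     (\<forall>ls as xs. (\<forall>i<H. ls i < k \<and> as i < A \<and> xs i \<in> set_pmf (rew M (ls i) i (as i)))
        \<longrightarrow> (\<Sum>i<H. xs i) \<le> 1)"

definition policies :: "nat \<Rightarrow> nat \<Rightarrow> nat \<Rightarrow> (nat \<Rightarrow> nat \<Rightarrow> nat) set" where
  "policies k H A = {\<pi>. \<forall>l i. (l < k \<and> i < H \<longrightarrow> \<pi> l i < A) \<and>
                                (\<not> (l < k \<and> i < H) \<longrightarrow> \<pi> l i = 0)}"

primrec run :: "mdp \<Rightarrow> (nat \<Rightarrow> nat \<Rightarrow> nat) \<Rightarrow> nat \<Rightarrow> nat \<Rightarrow> nat \<Rightarrow> real pmf" where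
  "run M \<pi> 0 l i = return_pmf 0"
| "run M \<pi> (Suc n) l i =
     bind_pmf (rew M l i (\<pi> l i)) (\<lambda>x.
     bind_pmf (trans M i l (\<pi> l i)) (\<lambda>s.
     bind_pmf (run M \<pi> n s (Suc i)) (\<lambda>y. return_pmf (x + y))))"

definition episode :: "mdp \<Rightarrow> nat \<Rightarrow> (nat \<Rightarrow> nat \<Rightarrow> nat) \<Rightarrow> real pmf" where
  "episode M H \<pi> = run M \<pi> H 0 0"

definition pvalue :: "mdp \<Rightarrow> nat \<Rightarrow> (nat \<Rightarrow> nat \<Rightarrow> nat) \<Rightarrow> real" where
  "pvalue M H \<pi> = measure_pmf.expectation (episode M H \<pi>) (\<lambda>x. x)"

definition opt :: "nat \<Rightarrow> nat \<Rightarrow> nat \<Rightarrow> mdp \<Rightarrow> real" where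
  "opt k H A M = Max (pvalue M H ` policies k H A)"

text \<open>A (possibly randomized) bandit-feedback algorithm maps the history of
  (chosen policy, observed total reward) pairs, oldest first, to a distribution over
  the next policy.  history M H alg t is the law of the history after t episodes.\<close>
type_synonym algorithm = "((nat \<Rightarrow> nat \<Rightarrow> nat) \<times> real) list \<Rightarrow> (nat \<Rightarrow> nat \<Rightarrow> nat) pmf"

primrec history :: "mdp \<Rightarrow> nat \<Rightarrow> algorithm \<Rightarrow> nat \<Rightarrow> ((nat \<Rightarrow> nat \<Rightarrow> nat) \<times> real) list pmf" where
  "history M H alg 0 = return_pmf []"
| "history M H alg (Suc t) =
     bind_pmf (history M H alg t) (\<lambda>h.
     bind_pmf (alg h) (\<lambda>\<pi>.
     bind_pmf (episode M H \<pi>) (\<lambda>r. return_pmf (h @ [(\<pi>, r)]))))"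

definition exp_regret :: "nat \<Rightarrow> nat \<Rightarrow> nat \<Rightarrow> mdp \<Rightarrow> algorithm \<Rightarrow> nat \<Rightarrow> real" where
  "exp_regret k H A M alg T =
     measure_pmf.expectation (history M H alg T)
       (\<lambda>h. \<Sum>p\<leftarrow>h. opt k H A M - pvalue M H (fst p))"

end

theory Submission
  imports Defs
begin

(* The hard instances hide an action sequence w: the learner stays on level 0 exactly as long
   as it plays w, and the only reward is a final coin flip of bias 1/2, raised to 1/2 + e iff w
   was played throughout. An episode thus reveals no more than whether the chosen policy follows
   w, so each instance is a bandit with A^H arms, one of them better by e.

   Compare each instance with the unbiased one (e = 0). By the chain rule, the KL divergence
   between the two laws of the whole history is at most 8 e^2 / 3 times the expected number of
   episodes that follow w in the unbiased instance; through the Bhattacharyya coefficient this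
   caps how much that number can grow once the bias is switched on. In the unbiased instance
   these numbers sum to T over all w, so for e = min (1/4) (sqrt (A^H / T) / 16) the regret
   averaged over w is at least min (sqrt (A^H T)) T / 64, and some w attains the average. *)

section \<open>Divergences between finite distributions\<close>

(* Summands with p x = 0 vanish; a summand with q x = 0 < p x is junk (ln 0 = 0), hence the
   domination hypotheses below. *)
definition kl_div :: "'a set \<Rightarrow> ('a \<Rightarrow> real) \<Rightarrow> ('a \<Rightarrow> real) \<Rightarrow> real" where
  "kl_div S p q = (\<Sum>x\<in>S. p x * ln (p x / q x))"

definition bhattacharyya :: "'a set \<Rightarrow> ('a \<Rightarrow> real) \<Rightarrow> ('a \<Rightarrow> real) \<Rightarrow> real" where
  "bhattacharyya S p q = (\<Sum>x\<in>S. sqrt (p x * q x))"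

lemma kl_div_self [simp]: "kl_div S p p = 0"
  unfolding kl_div_def by (intro sum.neutral) simp

lemma hellinger_term_le_kl_term:
  fixes p q :: real
  assumes "0 \<le> p" and "0 < p \<Longrightarrow> 0 < q"
  shows "2 * (p - sqrt (p * q)) \<le> p * ln (p / q)"
proof (cases "p = 0")
  case False
  then have p: "0 < p" and q: "0 < q" using assms by auto
  define y where "y = sqrt (q / p)"
  have y: "0 < y" using p q by (simp add: y_def)
  have "ln (p / q) = - 2 * ln y"
    using p q by (simp add: y_def ln_sqrt ln_div)
  moreover have "p * y = sqrt (p * q)"
  proof -
    have "sqrt p * sqrt p = p"
      using p by simp
    then show ?thesis
      using p by (simp add: y_def real_sqrt_divide real_sqrt_mult field_simps)
  qed
  moreover have "p * ln y \<le> p * (y - 1)"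
    using ln_le_minus_one[OF y] p by (intro mult_left_mono) auto
  ultimately show ?thesis by (simp add: algebra_simps)
qed simp

lemma hellinger_le_kl_div:
  assumes "finite S" and "\<And>x. x \<in> S \<Longrightarrow> 0 \<le> p x" and "sum p S = 1"
    and "\<And>x. x \<in> S \<Longrightarrow> 0 < p x \<Longrightarrow> 0 < q x"
  shows "2 * (1 - bhattacharyya S p q) \<le> kl_div S p q"
proof -
  have "2 * (1 - bhattacharyya S p q) = (\<Sum>x\<in>S. 2 * (p x - sqrt (p x * q x)))"
    using assms(3) by (simp add: bhattacharyya_def sum_subtractf sum_distrib_left[symmetric])
  also have "\<dots> \<le> kl_div S p q"
    unfolding kl_div_def by (intro sum_mono hellinger_term_le_kl_term) (use assms in auto)
  finally show ?thesis .
qed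

lemma diff_squares_mult_le:
  fixes a b c t l :: real
  assumes "0 \<le> a" "0 \<le> b" "0 \<le> c" "c \<le> t" "0 < l"
  shows "(b\<^sup>2 - a\<^sup>2) * c \<le> l / 2 * (b - a)\<^sup>2 + (a\<^sup>2 + b\<^sup>2) * t\<^sup>2 / l"
proof -
  have "(b\<^sup>2 - a\<^sup>2) * c = (b - a) * ((a + b) * c)"
    by (simp add: power2_eq_square algebra_simps)
  also have "\<dots> \<le> l / 2 * (b - a)\<^sup>2 + ((a + b) * c)\<^sup>2 / (2 * l)"
  proof -
    have "0 \<le> (l * (b - a) - (a + b) * c)\<^sup>2 / (2 * l)"
      using assms by simp
    then show ?thesis
      using assms by (simp add: field_simps power2_eq_square)
  qed
  also have "((a + b) * c)\<^sup>2 / (2 * l) \<le> (a\<^sup>2 + b\<^sup>2) * t\<^sup>2 / l"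
  proof -
    have "((a + b) * c)\<^sup>2 \<le> (a + b)\<^sup>2 * t\<^sup>2"
      using assms by (simp add: power_mult_distrib mult_left_mono power_mono)
    moreover have "(a + b)\<^sup>2 \<le> 2 * (a\<^sup>2 + b\<^sup>2)"
      using sum_squares_ge_zero[of "a - b" 0] by (simp add: power2_eq_square algebra_simps)
    ultimately have "((a + b) * c)\<^sup>2 \<le> 2 * (a\<^sup>2 + b\<^sup>2) * t\<^sup>2"
      by (meson mult_right_mono order_trans zero_le_power2)
    then show ?thesis
      using assms by (simp add: field_simps)
  qed
  finally show ?thesis
    by simp
qed

lemma sum_diff_le_bhattacharyya:
  assumes "finite S" and nonneg: "\<And>x. x \<in> S \<Longrightarrow> 0 \<le> p x \<and> 0 \<le> q x"
    and "sum p S = 1" "sum q S = 1"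
    and f: "\<And>x. x \<in> S \<Longrightarrow> 0 \<le> f x \<and> f x \<le> c" and "0 < l"
  shows "(\<Sum>x\<in>S. q x * f x) - (\<Sum>x\<in>S. p x * f x) \<le> l * (1 - bhattacharyya S p q) + 2 * c\<^sup>2 / l"
proof -
  have "(\<Sum>x\<in>S. q x * f x) - (\<Sum>x\<in>S. p x * f x)
      = (\<Sum>x\<in>S. ((sqrt (q x))\<^sup>2 - (sqrt (p x))\<^sup>2) * f x)"
    using nonneg by (simp add: sum_subtractf[symmetric] algebra_simps)
  also have "\<dots> \<le> (\<Sum>x\<in>S. l / 2 * (sqrt (q x) - sqrt (p x))\<^sup>2
                           + ((sqrt (p x))\<^sup>2 + (sqrt (q x))\<^sup>2) * c\<^sup>2 / l)"
    using nonneg f \<open>0 < l\<close> by (intro sum_mono diff_squares_mult_le) auto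
  also have "\<dots> = (\<Sum>x\<in>S. l / 2 * (p x + q x - 2 * sqrt (p x * q x)) + (p x + q x) * c\<^sup>2 / l)"
    using nonneg by (intro sum.cong refl) (simp add: power2_eq_square algebra_simps real_sqrt_mult)
  also have "\<dots> = l * (1 - bhattacharyya S p q) + 2 * c\<^sup>2 / l"
    using assms(3,4)
    by (simp add: bhattacharyya_def sum.distrib sum_subtractf sum_distrib_left[symmetric]
        sum_divide_distrib[symmetric] sum_distrib_right[symmetric] algebra_simps)
  finally show ?thesis .
qed

section \<open>Adaptively sampled sequences\<close>

lemma pmf_bind_map_pmf_inj:
  assumes inj: "\<And>a b a' b'. f a b = f a' b' \<Longrightarrow> a = a' \<and> b = b'"
  shows "pmf (bind_pmf p (\<lambda>a. map_pmf (f a) (q a))) (f a b) = pmf p a * pmf (q a) b"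
proof -
  have "pmf (map_pmf (f a') (q a')) (f a b) = (if a' = a then pmf (q a) b else 0)" for a'
  proof (cases "a' = a")
    case True
    have "inj (f a)"
      using inj by (auto intro: injI)
    with True show ?thesis
      by (simp add: pmf_map_inj')
  next
    case False
    then have "f a b \<notin> set_pmf (map_pmf (f a') (q a'))"
      using inj by auto
    with False show ?thesis
      by (simp add: pmf_eq_0_set_pmf)
  qed
  then have "pmf (bind_pmf p (\<lambda>a. map_pmf (f a) (q a))) (f a b)
      = measure_pmf.expectation p (\<lambda>a'. if a' = a then pmf (q a) b else 0)"
    by (simp add: pmf_bind)
  also have "\<dots> = pmf p a * pmf (q a) b"
    by (subst integral_measure_pmf_real[where A="{a}"]) (auto split: if_splits)
  finally show ?thesis .
qed

definition lists_of_length :: "'a set \<Rightarrow> nat \<Rightarrow> 'a list set" where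
  "lists_of_length X t = {h. set h \<subseteq> X \<and> length h = t}"

lemma finite_lists_of_length: "finite X \<Longrightarrow> finite (lists_of_length X t)"
  unfolding lists_of_length_def by (rule finite_lists_length_eq)

lemma lists_of_length_0 [simp]: "lists_of_length X 0 = {[]}"
  by (auto simp: lists_of_length_def)

lemma lists_of_length_Suc: "lists_of_length X (Suc t) = (\<lambda>(h, x). h @ [x]) ` (lists_of_length X t \<times> X)"
proof (intro equalityI subsetI)
  fix h' assume h': "h' \<in> lists_of_length X (Suc t)"
  then have "h' \<noteq> []"
    by (auto simp: lists_of_length_def)
  with h' have "h' = butlast h' @ [last h']" "butlast h' \<in> lists_of_length X t" "last h' \<in> X"
    by (auto simp: lists_of_length_def dest: in_set_butlastD)
  then show "h' \<in> (\<lambda>(h, x). h @ [x]) ` (lists_of_length X t \<times> X)"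
    by (metis (no_types, lifting) SigmaI case_prod_conv image_eqI)
qed (auto simp: lists_of_length_def)

lemma sum_lists_of_length_Suc:
  "(\<Sum>h'\<in>lists_of_length X (Suc t). f h') = (\<Sum>h\<in>lists_of_length X t. \<Sum>x\<in>X. f (h @ [x]))"
proof -
  have "inj_on (\<lambda>(h, x). h @ [x]) (lists_of_length X t \<times> X)"
    by (auto simp: inj_on_def)
  then show ?thesis
    by (simp add: lists_of_length_Suc sum.reindex sum.cartesian_product split_def)
qed

primrec seq_pmf :: "('x list \<Rightarrow> 'x pmf) \<Rightarrow> nat \<Rightarrow> 'x list pmf" where
  "seq_pmf K 0 = return_pmf []"
| "seq_pmf K (Suc t) = bind_pmf (seq_pmf K t) (\<lambda>h. map_pmf (\<lambda>x. h @ [x]) (K h))"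

lemma pmf_seq_pmf_snoc: "pmf (seq_pmf K (Suc t)) (h @ [x]) = pmf (seq_pmf K t) h * pmf (K h) x"
  by (simp only: seq_pmf.simps) (rule pmf_bind_map_pmf_inj[where f="\<lambda>h x. h @ [x]"], simp)

lemma set_pmf_seq_pmf:
  assumes "\<And>h. set_pmf (K h) \<subseteq> X"
  shows "set_pmf (seq_pmf K t) \<subseteq> lists_of_length X t"
  by (induction t) (use assms in \<open>fastforce simp: lists_of_length_def\<close>)+

lemma expectation_seq_pmf:
  assumes "finite X" and "\<And>h. set_pmf (K h) \<subseteq> X"
  shows "measure_pmf.expectation (seq_pmf K t) f = (\<Sum>h\<in>lists_of_length X t. pmf (seq_pmf K t) h * f h)"
proof -
  have "set_pmf (seq_pmf K t) \<subseteq> lists_of_length X t"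
    using assms(2) by (rule set_pmf_seq_pmf)
  then show ?thesis
    by (subst integral_measure_pmf_real[OF finite_lists_of_length[OF assms(1)]]) (auto simp: mult.commute)
qed

lemma sum_pmf_seq_pmf:
  assumes "finite X" and "\<And>h. set_pmf (K h) \<subseteq> X"
  shows "(\<Sum>h\<in>lists_of_length X t. pmf (seq_pmf K t) h) = 1"
  by (rule sum_pmf_eq_1[OF finite_lists_of_length[OF assms(1)] set_pmf_seq_pmf[OF assms(2)]])

locale dominated_kernels =
  fixes X :: "'x set" and K0 K1 :: "'x list \<Rightarrow> 'x pmf"
  assumes finite_X: "finite X"
    and set_pmf_K0: "set_pmf (K0 h) \<subseteq> X" and set_pmf_K1: "set_pmf (K1 h) \<subseteq> X"
    and dominated: "x \<in> X \<Longrightarrow> 0 < pmf (K0 h) x \<Longrightarrow> 0 < pmf (K1 h) x"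
begin

lemma seq_pmf_dominated:
  "h \<in> lists_of_length X t \<Longrightarrow> 0 < pmf (seq_pmf K0 t) h \<Longrightarrow> 0 < pmf (seq_pmf K1 t) h"
proof (induction t arbitrary: h)
  case (Suc t)
  then obtain h0 x where h: "h = h0 @ [x]" "h0 \<in> lists_of_length X t" "x \<in> X"
    by (auto simp: lists_of_length_Suc)
  with Suc.prems have "0 < pmf (seq_pmf K0 t) h0" "0 < pmf (K0 h0) x"
    by (auto simp: pmf_seq_pmf_snoc zero_less_mult_iff simp del: seq_pmf.simps)
  with Suc.IH h dominated show ?case
    by (simp add: pmf_seq_pmf_snoc del: seq_pmf.simps)
qed simp

lemma kl_div_seq_pmf_Suc:
  "kl_div (lists_of_length X (Suc t)) (pmf (seq_pmf K0 (Suc t))) (pmf (seq_pmf K1 (Suc t)))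
   = kl_div (lists_of_length X t) (pmf (seq_pmf K0 t)) (pmf (seq_pmf K1 t))
     + (\<Sum>h\<in>lists_of_length X t. pmf (seq_pmf K0 t) h * kl_div X (pmf (K0 h)) (pmf (K1 h)))"
proof -
  define P0 where "P0 = pmf (seq_pmf K0 t)"
  define P1 where "P1 = pmf (seq_pmf K1 t)"
  have ln_split: "P0 h * pmf (K0 h) x * ln (P0 h * pmf (K0 h) x / (P1 h * pmf (K1 h) x))
     = pmf (K0 h) x * (P0 h * ln (P0 h / P1 h))
       + P0 h * (pmf (K0 h) x * ln (pmf (K0 h) x / pmf (K1 h) x))"
    if "h \<in> lists_of_length X t" "x \<in> X" for h x
  proof (cases "0 < P0 h \<and> 0 < pmf (K0 h) x")
    case True
    then have "0 < P1 h" "0 < pmf (K1 h) x"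
      using seq_pmf_dominated dominated that by (auto simp: P0_def P1_def)
    with True show ?thesis
      by (simp add: ln_mult ln_div algebra_simps)
  next
    case False
    then have "P0 h = 0 \<or> pmf (K0 h) x = 0"
      by (auto simp: P0_def order_less_le)
    then show ?thesis
      by auto
  qed
  have "kl_div (lists_of_length X (Suc t)) (pmf (seq_pmf K0 (Suc t))) (pmf (seq_pmf K1 (Suc t)))
      = (\<Sum>h\<in>lists_of_length X t. \<Sum>x\<in>X.
           P0 h * pmf (K0 h) x * ln (P0 h * pmf (K0 h) x / (P1 h * pmf (K1 h) x)))"
    by (simp add: kl_div_def sum_lists_of_length_Suc pmf_seq_pmf_snoc P0_def P1_def
        del: seq_pmf.simps)
  also have "\<dots> = (\<Sum>h\<in>lists_of_length X t.
      (\<Sum>x\<in>X. pmf (K0 h) x) * (P0 h * ln (P0 h / P1 h)) + P0 h * kl_div X (pmf (K0 h)) (pmf (K1 h)))"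
    by (intro sum.cong refl)
      (simp add: ln_split kl_div_def sum.distrib sum_distrib_left sum_distrib_right)
  also have "\<dots> = kl_div (lists_of_length X t) P0 P1
      + (\<Sum>h\<in>lists_of_length X t. P0 h * kl_div X (pmf (K0 h)) (pmf (K1 h)))"
    by (simp add: sum_pmf_eq_1[OF finite_X set_pmf_K0] kl_div_def sum.distrib)
  finally show ?thesis
    by (simp add: P0_def P1_def)
qed

lemma sum_list_mean_seq_pmf_Suc:
  "(\<Sum>h\<in>lists_of_length X (Suc t). pmf (seq_pmf K0 (Suc t)) h * sum_list (map \<phi> h))
   = (\<Sum>h\<in>lists_of_length X t. pmf (seq_pmf K0 t) h * (sum_list (map \<phi> h) + (\<Sum>x\<in>X. pmf (K0 h) x * \<phi> x)))"
proof -
  have "(\<Sum>h\<in>lists_of_length X (Suc t). pmf (seq_pmf K0 (Suc t)) h * sum_list (map \<phi> h))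
      = (\<Sum>h\<in>lists_of_length X t. \<Sum>x\<in>X. pmf (seq_pmf K0 t) h * pmf (K0 h) x * (sum_list (map \<phi> h) + \<phi> x))"
    by (simp add: sum_lists_of_length_Suc pmf_seq_pmf_snoc del: seq_pmf.simps)
  also have "\<dots> = (\<Sum>h\<in>lists_of_length X t. pmf (seq_pmf K0 t) h
      * ((\<Sum>x\<in>X. pmf (K0 h) x) * sum_list (map \<phi> h) + (\<Sum>x\<in>X. pmf (K0 h) x * \<phi> x)))"
    by (intro sum.cong refl) (simp add: sum.distrib sum_distrib_left sum_distrib_right algebra_simps)
  finally show ?thesis
    by (simp add: sum_pmf_eq_1[OF finite_X set_pmf_K0])
qed

lemma kl_div_seq_pmf_le:
  assumes step: "\<And>h. kl_div X (pmf (K0 h)) (pmf (K1 h)) \<le> \<kappa> * (\<Sum>x\<in>X. pmf (K0 h) x * \<phi> x)"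
  shows "kl_div (lists_of_length X t) (pmf (seq_pmf K0 t)) (pmf (seq_pmf K1 t))
         \<le> \<kappa> * (\<Sum>h\<in>lists_of_length X t. pmf (seq_pmf K0 t) h * sum_list (map \<phi> h))"
proof (induction t)
  case 0
  then show ?case
    by (simp add: kl_div_def)
next
  case (Suc t)
  have "kl_div (lists_of_length X (Suc t)) (pmf (seq_pmf K0 (Suc t))) (pmf (seq_pmf K1 (Suc t)))
      \<le> \<kappa> * (\<Sum>h\<in>lists_of_length X t. pmf (seq_pmf K0 t) h * sum_list (map \<phi> h))
        + (\<Sum>h\<in>lists_of_length X t. pmf (seq_pmf K0 t) h * (\<kappa> * (\<Sum>x\<in>X. pmf (K0 h) x * \<phi> x)))"
    unfolding kl_div_seq_pmf_Suc
    by (intro add_mono Suc.IH sum_mono mult_left_mono step) simp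
  also have "\<dots> = \<kappa> * (\<Sum>h\<in>lists_of_length X (Suc t). pmf (seq_pmf K0 (Suc t)) h * sum_list (map \<phi> h))"
    unfolding sum_list_mean_seq_pmf_Suc
    by (simp add: sum_distrib_left sum.distrib algebra_simps)
  finally show ?case .
qed

lemma expectation_change_of_measure:
  assumes step: "\<And>h. kl_div X (pmf (K0 h)) (pmf (K1 h)) \<le> \<kappa> * (\<Sum>x\<in>X. pmf (K0 h) x * \<phi> x)"
    and \<phi>: "\<And>x. x \<in> X \<Longrightarrow> 0 \<le> \<phi> x \<and> \<phi> x \<le> 1" and "0 < l"
  shows "measure_pmf.expectation (seq_pmf K1 t) (\<lambda>h. sum_list (map \<phi> h))
         \<le> measure_pmf.expectation (seq_pmf K0 t) (\<lambda>h. sum_list (map \<phi> h)) * (1 + l * \<kappa> / 2)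
           + 2 * (real t)\<^sup>2 / l"
proof -
  define L where "L = lists_of_length X t"
  define P0 where "P0 = pmf (seq_pmf K0 t)"
  define P1 where "P1 = pmf (seq_pmf K1 t)"
  define E0 where "E0 = (\<Sum>h\<in>L. P0 h * sum_list (map \<phi> h))"
  have sum_P: "sum P0 L = 1" "sum P1 L = 1"
    unfolding P0_def P1_def L_def
    by (rule sum_pmf_seq_pmf[OF finite_X set_pmf_K0], rule sum_pmf_seq_pmf[OF finite_X set_pmf_K1])
  have "0 \<le> sum_list (map \<phi> h) \<and> sum_list (map \<phi> h) \<le> real t" if "h \<in> L" for h
  proof -
    have "set h \<subseteq> X" "length h = t"
      using that by (auto simp: L_def lists_of_length_def)
    then have "0 \<le> \<phi> x \<and> \<phi> x \<le> 1" if "x \<in> set h" for x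
      using \<phi> that by blast
    then have "0 \<le> sum_list (map \<phi> h)" "sum_list (map \<phi> h) \<le> (\<Sum>x\<leftarrow>h. 1)"
      by (auto intro!: sum_list_nonneg sum_list_mono)
    with \<open>length h = t\<close> show ?thesis
      by (simp add: sum_list_triv)
  qed
  then have "(\<Sum>h\<in>L. P1 h * sum_list (map \<phi> h)) - E0
      \<le> l * (1 - bhattacharyya L P0 P1) + 2 * (real t)\<^sup>2 / l"
    unfolding E0_def using sum_P \<open>0 < l\<close>
    by (intro sum_diff_le_bhattacharyya) (auto simp: L_def P0_def P1_def finite_lists_of_length finite_X)
  moreover have "2 * (1 - bhattacharyya L P0 P1) \<le> \<kappa> * E0"
  proof -
    have "2 * (1 - bhattacharyya L P0 P1) \<le> kl_div L P0 P1"
      using sum_P seq_pmf_dominated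
      by (intro hellinger_le_kl_div) (auto simp: L_def P0_def P1_def finite_lists_of_length finite_X)
    also have "\<dots> \<le> \<kappa> * E0"
      unfolding L_def P0_def P1_def E0_def using step by (rule kl_div_seq_pmf_le)
    finally show ?thesis .
  qed
  ultimately have "(\<Sum>h\<in>L. P1 h * sum_list (map \<phi> h)) \<le> E0 * (1 + l * \<kappa> / 2) + 2 * (real t)\<^sup>2 / l"
    using \<open>0 < l\<close> mult_left_mono[of "2 * (1 - bhattacharyya L P0 P1)" "\<kappa> * E0" "l / 2"]
    by (simp add: algebra_simps)
  then show ?thesis
    by (simp add: expectation_seq_pmf[OF finite_X set_pmf_K0] expectation_seq_pmf[OF finite_X set_pmf_K1]
        L_def P0_def P1_def E0_def)
qed

end

section \<open>Bandits with coin-flip rewards\<close>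

definition coin :: "real \<Rightarrow> real pmf" where
  "coin q = map_pmf of_bool (bernoulli_pmf q)"

lemma set_pmf_coin: "set_pmf (coin q) \<subseteq> {0, 1}"
  by (auto simp: coin_def)

lemma pmf_coin:
  assumes "0 \<le> q" "q \<le> 1"
  shows "pmf (coin q) 1 = q" and "pmf (coin q) 0 = 1 - q"
proof -
  have "inj (of_bool :: bool \<Rightarrow> real)"
    by (simp add: inj_def)
  then show "pmf (coin q) 1 = q" and "pmf (coin q) 0 = 1 - q"
    using assms pmf_map_inj'[of of_bool "bernoulli_pmf q" True] pmf_map_inj'[of of_bool "bernoulli_pmf q" False]
    by (simp_all add: coin_def)
qed

lemma expectation_coin: "0 \<le> q \<Longrightarrow> q \<le> 1 \<Longrightarrow> measure_pmf.expectation (coin q) (\<lambda>x. x) = q"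
  using set_pmf_coin by (subst integral_measure_pmf_real[where A="{0, 1}"]) (auto simp: pmf_coin)

lemma kl_div_coin_half_le:
  assumes "0 \<le> e" "e \<le> 1/4"
  shows "kl_div {0, 1} (pmf (coin (1/2))) (pmf (coin (1/2 + e))) \<le> 8 * e\<^sup>2 / 3"
proof -
  have e2: "e\<^sup>2 \<le> 1/16"
    using assms power_mono[of e "1/4" 2] by (simp add: power2_eq_square)
  have "kl_div {0, 1} (pmf (coin (1/2))) (pmf (coin (1/2 + e))) = ln (1 / (1 - 4 * e\<^sup>2)) / 2"
  proof -
    have "ln (1 / (1 + 2 * e)) + ln (1 / (1 - 2 * e)) = ln (1 / ((1 + 2 * e) * (1 - 2 * e)))"
      using assms by (simp add: ln_div ln_mult)
    moreover have "(1 + 2 * e) * (1 - 2 * e) = 1 - 4 * e\<^sup>2"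
      by (simp add: algebra_simps power2_eq_square)
    moreover have "(1/2) / (1/2 + e) = 1 / (1 + 2 * e)" "(1/2) / (1 - (1/2 + e)) = 1 / (1 - 2 * e)"
      using assms by (auto simp: field_simps)
    ultimately show ?thesis
      using assms by (simp add: kl_div_def pmf_coin add_divide_distrib[symmetric])
  qed
  also have "\<dots> \<le> (1 / (1 - 4 * e\<^sup>2) - 1) / 2"
    using e2 by (intro divide_right_mono ln_le_minus_one) auto
  also have "\<dots> = 2 * e\<^sup>2 / (1 - 4 * e\<^sup>2)"
    using e2 by (simp add: field_simps)
  also have "\<dots> \<le> 2 * e\<^sup>2 / (3/4)"
    using e2 by (intro divide_left_mono) auto
  finally show ?thesis
    by simp
qed

definition play_kernel ::
    "('p \<Rightarrow> 'r pmf) \<Rightarrow> (('p \<times> 'r) list \<Rightarrow> 'p pmf) \<Rightarrow> ('p \<times> 'r) list \<Rightarrow> ('p \<times> 'r) pmf" where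
  "play_kernel \<nu> alg h = bind_pmf (alg h) (\<lambda>\<pi>. map_pmf (Pair \<pi>) (\<nu> \<pi>))"

lemma pmf_play_kernel: "pmf (play_kernel \<nu> alg h) (\<pi>, r) = pmf (alg h) \<pi> * pmf (\<nu> \<pi>) r"
  unfolding play_kernel_def by (rule pmf_bind_map_pmf_inj) simp

lemma set_pmf_play_kernel:
  "set_pmf (alg h) \<subseteq> P \<Longrightarrow> (\<And>\<pi>. set_pmf (\<nu> \<pi>) \<subseteq> R) \<Longrightarrow> set_pmf (play_kernel \<nu> alg h) \<subseteq> P \<times> R"
  unfolding play_kernel_def by auto

lemma kl_div_play_kernel:
  "kl_div (P \<times> R) (pmf (play_kernel \<nu>0 alg h)) (pmf (play_kernel \<nu>1 alg h))
   = (\<Sum>\<pi>\<in>P. pmf (alg h) \<pi> * kl_div R (pmf (\<nu>0 \<pi>)) (pmf (\<nu>1 \<pi>)))"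
proof -
  have cancel: "pmf (alg h) \<pi> * pmf (\<nu>0 \<pi>) r
        * ln (pmf (alg h) \<pi> * pmf (\<nu>0 \<pi>) r / (pmf (alg h) \<pi> * pmf (\<nu>1 \<pi>) r))
      = pmf (alg h) \<pi> * (pmf (\<nu>0 \<pi>) r * ln (pmf (\<nu>0 \<pi>) r / pmf (\<nu>1 \<pi>) r))" for \<pi> r
    by (cases "pmf (alg h) \<pi> = 0") simp_all
  show ?thesis
    unfolding kl_div_def sum.cartesian_product' pmf_play_kernel cancel by (simp add: sum_distrib_left)
qed

lemma coin_bandit_change_of_measure:
  fixes G :: "'p \<Rightarrow> bool" and alg :: "('p \<times> real) list \<Rightarrow> 'p pmf" and e :: real
  assumes "finite P" and alg: "\<And>h. set_pmf (alg h) \<subseteq> P" and e: "0 \<le> e" "e \<le> 1/4" and "0 < T"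
  defines "K \<equiv> \<lambda>e. play_kernel (\<lambda>\<pi>. coin (1/2 + e * of_bool (G \<pi>))) alg"
  shows "measure_pmf.expectation (seq_pmf (K e) T) (\<lambda>h. \<Sum>p\<leftarrow>h. of_bool (G (fst p)))
         \<le> measure_pmf.expectation (seq_pmf (K 0) T) (\<lambda>h. \<Sum>p\<leftarrow>h. of_bool (G (fst p)))
             * (1 + 64 * T * e\<^sup>2 / 3) + T / 8"
proof -
  interpret dominated_kernels "P \<times> {0, 1}" "K 0" "K e"
  proof
    show "finite (P \<times> {0, 1 :: real})"
      using \<open>finite P\<close> by simp
    show "set_pmf (K 0 h) \<subseteq> P \<times> {0, 1}" "set_pmf (K e h) \<subseteq> P \<times> {0, 1}" for h
      unfolding K_def by (intro set_pmf_play_kernel alg set_pmf_coin)+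
    show "0 < pmf (K e h) x" if "x \<in> P \<times> {0, 1}" "0 < pmf (K 0 h) x" for h x
      using that e by (auto simp: K_def pmf_play_kernel pmf_coin zero_less_mult_iff)
  qed
  have "kl_div (P \<times> {0, 1}) (pmf (K 0 h)) (pmf (K e h))
        \<le> 8 * e\<^sup>2 / 3 * (\<Sum>x\<in>P \<times> {0, 1}. pmf (K 0 h) x * of_bool (G (fst x)))" for h
  proof -
    have "kl_div (P \<times> {0, 1}) (pmf (K 0 h)) (pmf (K e h))
        = (\<Sum>\<pi>\<in>P. pmf (alg h) \<pi> * kl_div {0, 1} (pmf (coin (1/2))) (pmf (coin (1/2 + e * of_bool (G \<pi>)))))"
      by (simp add: K_def kl_div_play_kernel)
    also have "\<dots> \<le> (\<Sum>\<pi>\<in>P. pmf (alg h) \<pi> * (8 * e\<^sup>2 / 3 * of_bool (G \<pi>)))"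
      using kl_div_coin_half_le[OF e] by (intro sum_mono mult_left_mono) auto
    also have "\<dots> = 8 * e\<^sup>2 / 3 * (\<Sum>\<pi>\<in>P. pmf (alg h) \<pi> * of_bool (G \<pi>) * (\<Sum>r\<in>{0, 1}. pmf (coin (1/2)) r))"
      by (simp add: pmf_coin sum_distrib_left mult_ac)
    also have "\<dots> = 8 * e\<^sup>2 / 3 * (\<Sum>\<pi>\<in>P. \<Sum>r\<in>{0, 1}. pmf (alg h) \<pi> * pmf (coin (1/2)) r * of_bool (G \<pi>))"
      by (simp only: sum_distrib_left mult_ac)
    also have "\<dots> = 8 * e\<^sup>2 / 3 * (\<Sum>x\<in>P \<times> {0, 1}. pmf (K 0 h) x * of_bool (G (fst x)))"
      unfolding K_def sum.cartesian_product' pmf_play_kernel by simp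
    finally show ?thesis .
  qed
  then have "measure_pmf.expectation (seq_pmf (K e) T) (\<lambda>h. \<Sum>p\<leftarrow>h. of_bool (G (fst p)))
      \<le> measure_pmf.expectation (seq_pmf (K 0) T) (\<lambda>h. \<Sum>p\<leftarrow>h. of_bool (G (fst p)))
          * (1 + 16 * T * (8 * e\<^sup>2 / 3) / 2) + 2 * (real T)\<^sup>2 / (16 * T)"
    by (rule expectation_change_of_measure) (use \<open>0 < T\<close> in auto)
  then show ?thesis
    using \<open>0 < T\<close> by (simp add: power2_eq_square mult_ac)
qed

section \<open>The hard instances\<close>

definition follows :: "nat \<Rightarrow> (nat \<Rightarrow> nat) \<Rightarrow> (nat \<Rightarrow> nat \<Rightarrow> nat) \<Rightarrow> bool" where
  "follows H w \<pi> \<longleftrightarrow> (\<forall>i<H. \<pi> 0 i = w i)"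

(* Level 0 records that w has been played so far. The only reward is the coin flip at the last
   stage, biased by e iff w is followed there as well. *)
definition hard_mdp :: "nat \<Rightarrow> (nat \<Rightarrow> nat) \<Rightarrow> real \<Rightarrow> mdp" where
  "hard_mdp H w e =
     \<lparr>trans = (\<lambda>i l a. return_pmf (if l = 0 \<and> a = w i then 0 else 1)),
      rew = (\<lambda>l i a. if Suc i = H then coin (1/2 + e * of_bool (l = 0 \<and> a = w i)) else return_pmf 0)\<rparr>"

lemma run_hard_mdp:
  assumes "i + n = H" "0 < n"
  shows "run (hard_mdp H w e) \<pi> n l i
         = coin (1/2 + e * of_bool (l = 0 \<and> (\<forall>j. i \<le> j \<and> j < H \<longrightarrow> \<pi> 0 j = w j)))"
  using assms
proof (induction n arbitrary: l i)
  case (Suc n)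
  show ?case
  proof (cases "n = 0")
    case True
    with Suc.prems have "(l = 0 \<and> \<pi> l i = w i) \<longleftrightarrow> (l = 0 \<and> (\<forall>j. i \<le> j \<and> j < H \<longrightarrow> \<pi> 0 j = w j))"
      by (auto simp: le_less_Suc_eq)
    with True Suc.prems show ?thesis
      by (simp add: hard_mdp_def bind_return_pmf bind_return_pmf')
  next
    case False
    define s where "s = (if l = 0 \<and> \<pi> l i = w i then 0 else 1 :: nat)"
    have "run (hard_mdp H w e) \<pi> (Suc n) l i = run (hard_mdp H w e) \<pi> n s (Suc i)"
      using False Suc.prems by (simp add: hard_mdp_def s_def bind_return_pmf bind_return_pmf')
    also have "\<dots> = coin (1/2 + e * of_bool (s = 0 \<and> (\<forall>j. Suc i \<le> j \<and> j < H \<longrightarrow> \<pi> 0 j = w j)))"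
      using False Suc.prems by (intro Suc.IH) auto
    also have "(s = 0 \<and> (\<forall>j. Suc i \<le> j \<and> j < H \<longrightarrow> \<pi> 0 j = w j))
             \<longleftrightarrow> (l = 0 \<and> (\<forall>j. i \<le> j \<and> j < H \<longrightarrow> \<pi> 0 j = w j))"
      using Suc.prems unfolding s_def by (auto simp: Suc_le_eq) (metis le_neq_implies_less)
    finally show ?thesis .
  qed
qed simp

lemma episode_hard_mdp:
  "0 < H \<Longrightarrow> episode (hard_mdp H w e) H \<pi> = coin (1/2 + e * of_bool (follows H w \<pi>))"
  by (simp add: episode_def run_hard_mdp follows_def)

lemma pvalue_hard_mdp:
  "0 < H \<Longrightarrow> 0 \<le> e \<Longrightarrow> e \<le> 1/2 \<Longrightarrow> pvalue (hard_mdp H w e) H \<pi> = 1/2 + e * of_bool (follows H w \<pi>)"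
  by (simp add: pvalue_def episode_hard_mdp expectation_coin)

lemma valid_hard_mdp:
  assumes "0 < H" "0 \<le> e" "e \<le> 1/2"
  shows "valid_mdp 2 H A (hard_mdp H w e)"
  unfolding valid_mdp_def
proof (intro conjI allI impI)
  fix l i a :: nat and x :: real
  assume "l < 2 \<and> i < H \<and> a < A \<and> x \<in> set_pmf (rew (hard_mdp H w e) l i a)"
  then show "0 \<le> x"
    by (auto simp: hard_mdp_def split: if_splits dest: set_pmf_coin[THEN subsetD])
next
  fix ls as :: "nat \<Rightarrow> nat" and xs :: "nat \<Rightarrow> real"
  assume xs: "\<forall>i<H. ls i < 2 \<and> as i < A \<and> xs i \<in> set_pmf (rew (hard_mdp H w e) (ls i) i (as i))"
  obtain m where m: "H = Suc m"
    using assms by (cases H) auto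
  have "xs i = 0" if "i < m" for i
    using xs[rule_format, of i] that m by (auto simp: hard_mdp_def)
  moreover have "xs m \<in> {0, 1}"
    using xs[rule_format, of m] m by (auto simp: hard_mdp_def dest: set_pmf_coin[THEN subsetD])
  ultimately show "(\<Sum>i<H. xs i) \<le> 1"
    using m by auto
qed (simp add: hard_mdp_def)

lemma finite_policies: "finite (policies k H A)"
proof -
  define rows where "rows = {g. \<forall>i. (i \<in> {..<H} \<longrightarrow> g i \<in> {..<A}) \<and> (i \<notin> {..<H} \<longrightarrow> g i = (0::nat))}"
  have "finite rows"
    unfolding rows_def by (intro finite_set_of_finite_funs) auto
  then have "finite {\<pi>. \<forall>l. (l \<in> {..<k} \<longrightarrow> \<pi> l \<in> rows) \<and> (l \<notin> {..<k} \<longrightarrow> \<pi> l = (\<lambda>_. 0))}"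
    by (intro finite_set_of_finite_funs) auto
  moreover have "policies k H A \<subseteq> {\<pi>. \<forall>l. (l \<in> {..<k} \<longrightarrow> \<pi> l \<in> rows) \<and> (l \<notin> {..<k} \<longrightarrow> \<pi> l = (\<lambda>_. 0))}"
    by (auto simp: policies_def rows_def)
  ultimately show ?thesis
    by (rule finite_subset[rotated])
qed

lemma opt_hard_mdp:
  assumes "0 < H" "0 \<le> e" "e \<le> 1/2" and w: "w \<in> {..<H} \<rightarrow>\<^sub>E {..<A}"
  shows "opt 2 H A (hard_mdp H w e) = 1/2 + e"
  unfolding opt_def
proof (rule Max_eqI)
  show "finite (pvalue (hard_mdp H w e) H ` policies 2 H A)"
    by (simp add: finite_policies)
  show "y \<le> 1/2 + e" if y: "y \<in> pvalue (hard_mdp H w e) H ` policies 2 H A" for y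
  proof -
    obtain \<pi> where "y = pvalue (hard_mdp H w e) H \<pi>"
      using y by blast
    then show ?thesis
      using assms by (cases "follows H w \<pi>") (simp_all add: pvalue_hard_mdp)
  qed
  define \<pi> where "\<pi> l i = (if l = 0 \<and> i < H then w i else 0)" for l i :: nat
  have "w i < A" if "i < H" for i
    using w that by auto
  with \<open>0 < H\<close> have "\<pi> \<in> policies 2 H A"
    unfolding policies_def \<pi>_def by (auto intro: order.strict_trans1)
  moreover have "pvalue (hard_mdp H w e) H \<pi> = 1/2 + e"
    using assms by (simp add: pvalue_hard_mdp follows_def \<pi>_def)
  ultimately show "1/2 + e \<in> pvalue (hard_mdp H w e) H ` policies 2 H A"
    by (auto intro: rev_image_eqI)
qed

lemma sum_follows_eq_1:
  assumes "\<pi> \<in> policies 2 H A"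
  shows "(\<Sum>w\<in>{..<H} \<rightarrow>\<^sub>E {..<A}. of_bool (follows H w \<pi>) :: real) = 1"
proof -
  define r where "r = restrict (\<pi> 0) {..<H}"
  have "r \<in> {..<H} \<rightarrow>\<^sub>E {..<A}"
    using assms by (auto simp: policies_def r_def)
  have "(\<Sum>w\<in>{..<H} \<rightarrow>\<^sub>E {..<A}. of_bool (follows H w \<pi>) :: real)
      = (\<Sum>w\<in>{..<H} \<rightarrow>\<^sub>E {..<A}. if w = r then 1 else 0)"
    by (intro sum.cong refl) (auto simp: follows_def r_def fun_eq_iff PiE_def extensional_def)
  also have "\<dots> = 1"
    using \<open>r \<in> {..<H} \<rightarrow>\<^sub>E {..<A}\<close> by (simp add: finite_PiE)
  finally show ?thesis .
qed

definition hits :: "nat \<Rightarrow> (nat \<Rightarrow> nat) \<Rightarrow> ((nat \<Rightarrow> nat \<Rightarrow> nat) \<times> real) list \<Rightarrow> real" where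
  "hits H w h = (\<Sum>p\<leftarrow>h. of_bool (follows H w (fst p)))"

lemma history_eq_seq_pmf: "history M H alg t = seq_pmf (play_kernel (episode M H) alg) t"
  by (induction t) (simp_all add: play_kernel_def map_pmf_def bind_assoc_pmf bind_return_pmf)

lemma history_hard_mdp:
  assumes "0 < H"
  shows "history (hard_mdp H w e) H alg t
         = seq_pmf (play_kernel (\<lambda>\<pi>. coin (1/2 + e * of_bool (follows H w \<pi>))) alg) t"
proof -
  have "episode (hard_mdp H w e) H = (\<lambda>\<pi>. coin (1/2 + e * of_bool (follows H w \<pi>)))"
    using assms by (simp add: fun_eq_iff episode_hard_mdp)
  then show ?thesis
    by (simp add: history_eq_seq_pmf)
qed

lemma exp_regret_hard_mdp:
  fixes T :: nat
  assumes "0 < H" "0 \<le> e" "e \<le> 1/2" "w \<in> {..<H} \<rightarrow>\<^sub>E {..<A}"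
    and alg: "\<And>h. set_pmf (alg h) \<subseteq> policies 2 H A"
  shows "exp_regret 2 H A (hard_mdp H w e) alg T
         = e * (real T - measure_pmf.expectation (history (hard_mdp H w e) H alg T) (hits H w))"
proof -
  define K where "K = play_kernel (\<lambda>\<pi>. coin (1/2 + e * of_bool (follows H w \<pi>))) alg"
  define L where "L = lists_of_length (policies 2 H A \<times> {0, 1 :: real}) T"
  have support: "finite (policies 2 H A \<times> {0, 1 :: real})" "\<And>h. set_pmf (K h) \<subseteq> policies 2 H A \<times> {0, 1}"
    unfolding K_def by (simp add: finite_policies) (intro set_pmf_play_kernel alg set_pmf_coin)
  have regret: "(\<Sum>p\<leftarrow>h. opt 2 H A (hard_mdp H w e) - pvalue (hard_mdp H w e) H (fst p))
      = e * (real (length h) - hits H w h)" for h :: "((nat \<Rightarrow> nat \<Rightarrow> nat) \<times> real) list"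
    using assms by (induction h) (simp_all add: opt_hard_mdp pvalue_hard_mdp hits_def algebra_simps)
  have "exp_regret 2 H A (hard_mdp H w e) alg T = (\<Sum>h\<in>L. pmf (seq_pmf K T) h * (e * (real T - hits H w h)))"
    unfolding exp_regret_def history_hard_mdp[OF \<open>0 < H\<close>] K_def[symmetric] expectation_seq_pmf[OF support] regret
    by (intro sum.cong) (auto simp: L_def lists_of_length_def)
  also have "\<dots> = e * (real T * (\<Sum>h\<in>L. pmf (seq_pmf K T) h) - (\<Sum>h\<in>L. pmf (seq_pmf K T) h * hits H w h))"
    by (simp add: sum_distrib_left sum_distrib_right sum_subtractf algebra_simps)
  also have "\<dots> = e * (real T - measure_pmf.expectation (history (hard_mdp H w e) H alg T) (hits H w))"
    unfolding history_hard_mdp[OF \<open>0 < H\<close>] K_def[symmetric] expectation_seq_pmf[OF support]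
    by (simp add: L_def sum_pmf_seq_pmf[OF support])
  finally show ?thesis .
qed

lemma sum_expectation_hits:
  fixes T :: nat
  assumes alg: "\<And>h. set_pmf (alg h) \<subseteq> policies 2 H A"
  shows "(\<Sum>w\<in>{..<H} \<rightarrow>\<^sub>E {..<A}.
            measure_pmf.expectation (seq_pmf (play_kernel (\<lambda>\<pi>. coin (q \<pi>)) alg) T) (hits H w))
         = real T"
proof -
  define K where "K = play_kernel (\<lambda>\<pi>. coin (q \<pi>)) alg"
  define L where "L = lists_of_length (policies 2 H A \<times> {0, 1 :: real}) T"
  have support: "finite (policies 2 H A \<times> {0, 1 :: real})" "\<And>h. set_pmf (K h) \<subseteq> policies 2 H A \<times> {0, 1}"
    unfolding K_def by (simp add: finite_policies) (intro set_pmf_play_kernel alg set_pmf_coin)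
  have total: "(\<Sum>w\<in>{..<H} \<rightarrow>\<^sub>E {..<A}. hits H w h) = real T" if "h \<in> L" for h
  proof -
    have "(\<Sum>w\<in>{..<H} \<rightarrow>\<^sub>E {..<A}. hits H w h) = (\<Sum>p\<leftarrow>h. \<Sum>w\<in>{..<H} \<rightarrow>\<^sub>E {..<A}. of_bool (follows H w (fst p)))"
      unfolding hits_def by (induction h) (simp_all add: sum.distrib)
    also have "\<dots> = (\<Sum>p\<leftarrow>h. 1)"
      using that by (intro arg_cong[where f=sum_list] map_cong refl sum_follows_eq_1)
        (auto simp: L_def lists_of_length_def)
    finally show ?thesis
      using that by (simp add: sum_list_triv L_def lists_of_length_def)
  qed
  have "(\<Sum>w\<in>{..<H} \<rightarrow>\<^sub>E {..<A}. \<Sum>h\<in>L. pmf (seq_pmf K T) h * hits H w h)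
      = (\<Sum>h\<in>L. pmf (seq_pmf K T) h * (\<Sum>w\<in>{..<H} \<rightarrow>\<^sub>E {..<A}. hits H w h))"
    by (subst sum.swap) (simp add: sum_distrib_left)
  also have "\<dots> = (\<Sum>h\<in>L. pmf (seq_pmf K T) h * real T)"
    using total by simp
  also have "\<dots> = real T"
    using sum_pmf_seq_pmf[OF support] by (simp add: L_def sum_distrib_right[symmetric])
  finally show ?thesis
    unfolding K_def[symmetric] expectation_seq_pmf[OF support] by (simp add: L_def)
qed

lemma sum_exp_regret_hard_mdp_ge:
  fixes T :: nat and e :: real
  assumes "0 < H" and alg: "\<And>h. set_pmf (alg h) \<subseteq> policies 2 H A" and e: "0 \<le> e" "e \<le> 1/4" and "0 < T"
  shows "e * (real A ^ H * real T - real T * (1 + 64 * real T * e\<^sup>2 / 3) - real A ^ H * real T / 8)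
         \<le> (\<Sum>w\<in>{..<H} \<rightarrow>\<^sub>E {..<A}. exp_regret 2 H A (hard_mdp H w e) alg T)"
proof -
  define W where "W = {..<H} \<rightarrow>\<^sub>E {..<A}"
  define E0 where "E0 w = measure_pmf.expectation (seq_pmf (play_kernel (\<lambda>_. coin (1/2)) alg) T) (hits H w)" for w
  define E where "E w = measure_pmf.expectation (history (hard_mdp H w e) H alg T) (hits H w)" for w
  have "E w \<le> E0 w * (1 + 64 * real T * e\<^sup>2 / 3) + real T / 8" for w
    using coin_bandit_change_of_measure[where G="follows H w" and alg=alg and P="policies 2 H A",
        OF finite_policies alg e \<open>0 < T\<close>]
    by (simp add: E_def E0_def history_hard_mdp[OF \<open>0 < H\<close>] hits_def[abs_def])
  then have "sum E W \<le> (\<Sum>w\<in>W. E0 w * (1 + 64 * real T * e\<^sup>2 / 3) + real T / 8)"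
    by (rule sum_mono)
  also have "\<dots> = real T * (1 + 64 * real T * e\<^sup>2 / 3) + real A ^ H * real T / 8"
    using sum_expectation_hits[where alg=alg and q="\<lambda>_. 1/2" and T=T, OF alg]
    by (simp add: W_def E0_def sum.distrib sum_distrib_right[symmetric] card_PiE)
  finally have "real A ^ H * real T - real T * (1 + 64 * real T * e\<^sup>2 / 3) - real A ^ H * real T / 8
      \<le> real A ^ H * real T - sum E W"
    by linarith
  then have "e * (real A ^ H * real T - real T * (1 + 64 * real T * e\<^sup>2 / 3) - real A ^ H * real T / 8)
      \<le> e * (real (card W) * real T - sum E W)"
    using e(1) by (simp add: W_def card_PiE mult_left_mono)
  also have "\<dots> = (\<Sum>w\<in>W. e * (real T - E w))"
    by (simp add: sum_distrib_left[symmetric] sum_subtractf)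
  also have "\<dots> = (\<Sum>w\<in>W. exp_regret 2 H A (hard_mdp H w e) alg T)"
    using assms by (intro sum.cong) (simp_all add: W_def E_def exp_regret_hard_mdp)
  finally show ?thesis
    by (simp add: W_def)
qed

lemma regret_bound_arith:
  fixes N T :: real
  assumes N: "2 \<le> N" and T: "0 < T"
  defines "e \<equiv> min (1/4) (sqrt (N * T) / (16 * T))"
  shows "N * (1/64 * min (sqrt (N * T)) T) \<le> e * (N * T - T * (1 + 64 * T * e\<^sup>2 / 3) - N * T / 8)"
proof -
  have e0: "0 \<le> e"
    using N T by (simp add: e_def)
  have "e\<^sup>2 \<le> (sqrt (N * T) / (16 * T))\<^sup>2"
    using e0 by (intro power_mono) (auto simp: e_def)
  also have "\<dots> = N / (256 * T)"
    using N T by (simp add: power_divide power_mult_distrib power2_eq_square)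
  finally have "64 * T * e\<^sup>2 / 3 * T \<le> 64 * T * (N / (256 * T)) / 3 * T"
    using T by (intro mult_right_mono divide_right_mono mult_left_mono) auto
  also have "\<dots> = N * T / 12"
    using T by (simp add: field_simps)
  finally have "64 * T * e\<^sup>2 / 3 * T \<le> N * T / 12" .
  moreover have "T \<le> N * T / 2"
    using N T by simp
  moreover have "T * (1 + 64 * T * e\<^sup>2 / 3) = T + 64 * T * e\<^sup>2 / 3 * T"
    by (simp add: algebra_simps)
  moreover have "0 \<le> N * T"
    using N T by simp
  ultimately have margin: "N * T / 4 \<le> N * T - T * (1 + 64 * T * e\<^sup>2 / 3) - N * T / 8"
    by linarith
  have "min (sqrt (N * T)) T / 16 \<le> e * T"
    using T by (auto simp: e_def min_def field_simps)
  then have "N * (1/64 * min (sqrt (N * T)) T) \<le> N / 4 * (e * T)"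
    using N by (simp add: mult_left_mono)
  also have "\<dots> = e * (N * T / 4)"
    by simp
  also have "\<dots> \<le> e * (N * T - T * (1 + 64 * T * e\<^sup>2 / 3) - N * T / 8)"
    using margin e0 by (rule mult_left_mono)
  finally show ?thesis .
qed

lemma exists_ge_average:
  fixes f :: "'a \<Rightarrow> real"
  assumes "finite W" "W \<noteq> {}" "real (card W) * B \<le> sum f W"
  shows "\<exists>w\<in>W. B \<le> f w"
proof (rule ccontr)
  assume "\<not> (\<exists>w\<in>W. B \<le> f w)"
  then have "sum f W < real (card W) * B"
    using assms by (intro sum_bounded_above_strict) (auto simp: card_gt_0_iff)
  with assms show False
    by simp
qed

lemma hard_mdp_regret_ge:
  fixes T :: nat
  assumes "1 \<le> H" "2 \<le> A" "0 < T" and alg: "\<And>h. set_pmf (alg h) \<subseteq> policies 2 H A"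
  defines "e \<equiv> min (1/4) (sqrt (real A ^ H * real T) / (16 * real T))"
  shows "\<exists>w. valid_mdp 2 H A (hard_mdp H w e)
             \<and> 1/64 * min (sqrt (real A ^ H * real T)) (real T) \<le> exp_regret 2 H A (hard_mdp H w e) alg T"
proof -
  define W where "W = {..<H} \<rightarrow>\<^sub>E {..<A}"
  have "A \<le> A ^ H"
    using assms(1,2) power_increasing[of 1 H A] by simp
  then have N: "2 \<le> real A ^ H"
    using assms(2) unfolding of_nat_power[symmetric] by linarith
  then have "0 < real A ^ H * real T"
    using \<open>0 < T\<close> by (intro mult_pos_pos) linarith+
  then have e: "0 < e" "e \<le> 1/4"
    using \<open>0 < T\<close> by (auto simp: e_def)
  have "real (card W) * (1/64 * min (sqrt (real A ^ H * real T)) (real T))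
      = real A ^ H * (1/64 * min (sqrt (real A ^ H * real T)) (real T))"
    by (simp add: W_def card_PiE)
  also have "\<dots> \<le> e * (real A ^ H * real T - real T * (1 + 64 * real T * e\<^sup>2 / 3) - real A ^ H * real T / 8)"
    unfolding e_def using N \<open>0 < T\<close> by (intro regret_bound_arith) auto
  also have "\<dots> \<le> (\<Sum>w\<in>W. exp_regret 2 H A (hard_mdp H w e) alg T)"
    unfolding W_def using assms(1) alg e \<open>0 < T\<close> by (intro sum_exp_regret_hard_mdp_ge) auto
  finally have average: "real (card W) * (1/64 * min (sqrt (real A ^ H * real T)) (real T))
      \<le> (\<Sum>w\<in>W. exp_regret 2 H A (hard_mdp H w e) alg T)" .
  have "finite W" "W \<noteq> {}"
    using assms(2) by (auto simp: W_def finite_PiE PiE_eq_empty_iff lessThan_empty_iff)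
  then obtain w where "1/64 * min (sqrt (real A ^ H * real T)) (real T) \<le> exp_regret 2 H A (hard_mdp H w e) alg T"
    using exists_ge_average[OF _ _ average] by blast
  moreover have "valid_mdp 2 H A (hard_mdp H w e)"
    using assms(1) e by (intro valid_hard_mdp) auto
  ultimately show ?thesis
    by blast
qed

theorem theorem3:
  shows "\<exists>c::real. c > 0 \<and>
    (\<forall>H A T::nat. \<forall>alg::algorithm. 1 \<le> H \<longrightarrow> 2 \<le> A \<longrightarrow>
       (\<forall>h. set_pmf (alg h) \<subseteq> policies 2 H A) \<longrightarrow>
       (\<exists>M. valid_mdp 2 H A M \<and>
            exp_regret 2 H A M alg T \<ge> c * min (sqrt (real A ^ H * real T)) (real T)))"
proof (intro exI[of _ "1/64"] conjI allI impI)
  fix H A T :: nat and alg :: algorithm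
  assume "1 \<le> H" "2 \<le> A" and alg: "\<forall>h. set_pmf (alg h) \<subseteq> policies 2 H A"
  show "\<exists>M. valid_mdp 2 H A M \<and> 1/64 * min (sqrt (real A ^ H * real T)) (real T) \<le> exp_regret 2 H A M alg T"
  proof (cases "T = 0")
    case True
    then show ?thesis
      using valid_hard_mdp[of H 0 A "\<lambda>_. 0"] \<open>1 \<le> H\<close> by (auto simp: exp_regret_def)
  next
    case False
    then show ?thesis
      using hard_mdp_regret_ge[of H A T alg] \<open>1 \<le> H\<close> \<open>2 \<le> A\<close> alg by blast
  qed
qed simp

end
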